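(* For integers $k\ge1$ let $Z_k$ have the Gamma distribution with shape $k$ and rate $k$, and for $\delta\in(0,1)$ let $V(k,\delta)=\inf\{y: \mathbb P(|Z_k-1|\le y)\ge 1-\delta/2\}$ be the $(1-\delta/2)$-quantile of $|Z_k-1|$. There exist universal constants $0<c_1\le 1$ and $0<c_2\le 2$ such that for all integers $k\ge1$ and all $\delta\in(0,1)$, $$V(k,\delta)\ge c_1\Bigl(\sqrt{\frac{0\vee\log(c_2/\delta)}{k}}+\frac{\log(c_2/\delta)}{k}\Bigr).$$ *)

theory Defs
  imports "HOL-Probability.Probability"
begin

text \<open>Law of Z_k ~ Gamma(shape k, rate k), as a measure on the reals.
  The library's erlang_density m l is the Gamma density with shape m+1 and rate l.\<close>
definition gamma_kk :: "nat \<Rightarrow> real measure" where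
  "gamma_kk k = density lborel (\<lambda>x. ennreal (erlang_density (k - 1) (real k) x))"

definition V :: "nat \<Rightarrow> real \<Rightarrow> real" where
  "V k \<delta> = Inf {y. measure (gamma_kk k) {x. \<bar>x - 1\<bar> \<le> y} \<ge> 1 - \<delta> / 2}"

end

(*
  Z_k > 1 + a exactly when a Poisson variable of mean mu = k (1 + a) is at most k - 1,
  so it suffices to bound this Poisson probability from below by exp (-L) / 100 for
  a = (sqrt (L / k) + L / k) / 10.  Keep only the r = ceiling (sqrt k / 2) terms just
  below k; each is at least p_k ((k - r + 1) / mu)^r, where p_k is the term at k.
  After rescaling, r times this bound is the product of
    r k^k exp (-k) / k!  >=  r / (e sqrt k)  >=  1 / (2 e)          (Stirling),
    exp (- k a) (1 + a)^(k - r)  >=  exp (-1 - L)    (ln (1 + a) >= 2 a / (2 + a)),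
    ((k - r + 1) / k)^r  >=  1/4                                  (Bernoulli),
  and 8 e^2 <= 100.  Hence V k delta >= a whenever delta <= exp (-L) / 100, which gives
  the theorem with c1 = 1/10 and c2 = 1/100.
*)
theory Submission
  imports Defs
begin

lemma real_sqrt_le_self:
  fixes x :: real
  assumes "1 \<le> x"
  shows "sqrt x \<le> x"
proof -
  have "sqrt x * 1 \<le> sqrt x * sqrt x"
    using assms by (intro mult_left_mono) auto
  then show ?thesis
    using assms by simp
qed

lemma ln_one_plus_ge:
  fixes x :: real
  assumes "0 \<le> x"
  shows "2 * x / (2 + x) \<le> ln (1 + x)"
proof -
  let ?f = "\<lambda>t::real. ln (1 + t) - 2 * t / (2 + t)"
  have "?f 0 \<le> ?f x"
  proof (rule DERIV_nonneg_imp_nondecreasing[OF assms])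
    fix t :: real
    assume "0 \<le> t"
    then have "(?f has_real_derivative 1 / (1 + t) - 4 / (2 + t)\<^sup>2) (at t)"
      by (auto intro!: derivative_eq_intros simp: power2_eq_square)
    moreover have "4 * (1 + t) \<le> (2 + t)\<^sup>2"
      by (simp add: power2_eq_square algebra_simps)
    then have "4 / (2 + t)\<^sup>2 \<le> 1 / (1 + t)"
      using \<open>0 \<le> t\<close> by (simp add: divide_simps)
    ultimately show "\<exists>y. (?f has_real_derivative y) (at t) \<and> 0 \<le> y"
      by force
  qed
  then show ?thesis
    by simp
qed

lemma fact_Stirling_upper:
  assumes "1 \<le> k"
  shows "fact k * exp (real k) \<le> exp 1 * sqrt (real k) * real k ^ k"
  using assms
proof (induction k rule: dec_induct)
  case base
  then show ?case by simp
next
  case (step k)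
  have k: "1 \<le> real k"
    using step by simp
  have pos: "0 < 1 + 1 / real k"
    using k by (simp add: add_pos_nonneg)
  have "1 = 2 * (1 / real k) / (2 + 1 / real k) * (real k + 1/2)"
    using k by (simp add: field_simps)
  also have "\<dots> \<le> ln (1 + 1 / real k) * (real k + 1/2)"
    using k by (intro mult_right_mono ln_one_plus_ge) auto
  finally have "exp 1 \<le> (1 + 1 / real k) powr (real k + 1/2)"
    using pos by (simp add: powr_def mult.commute)
  also have "\<dots> = (1 + 1 / real k) ^ k * sqrt (1 + 1 / real k)"
    using pos by (simp add: powr_add powr_realpow powr_half_sqrt)
  finally have "exp 1 * (sqrt (real k) * real k ^ k)
      \<le> (1 + 1 / real k) ^ k * sqrt (1 + 1 / real k) * (sqrt (real k) * real k ^ k)"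
    by (intro mult_right_mono) auto
  also have "\<dots> = ((1 + 1 / real k) * real k) ^ k * sqrt ((1 + 1 / real k) * real k)"
    by (simp add: power_mult_distrib real_sqrt_mult)
  also have "(1 + 1 / real k) * real k = real k + 1"
    using k by (simp add: field_simps)
  finally have key: "exp 1 * sqrt (real k) * real k ^ k \<le> (real k + 1) ^ k * sqrt (real k + 1)"
    by (simp add: mult.assoc)
  have "fact (Suc k) * exp (real (Suc k)) = (real k + 1) * exp 1 * (fact k * exp (real k))"
    by (simp add: exp_add algebra_simps)
  also have "\<dots> \<le> (real k + 1) * exp 1 * (exp 1 * sqrt (real k) * real k ^ k)"
    using step.IH by (intro mult_left_mono) auto
  also have "\<dots> \<le> (real k + 1) * exp 1 * ((real k + 1) ^ k * sqrt (real k + 1))"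
    using key by (intro mult_left_mono) auto
  also have "\<dots> = exp 1 * sqrt (real (Suc k)) * real (Suc k) ^ Suc k"
    by (simp add: algebra_simps)
  finally show ?case .
qed

lemma power_mult_fact_le_fact:
  assumes "n \<le> m"
  shows "(real n + 1) ^ (m - n) * fact n \<le> (fact m :: real)"
proof -
  have "(n + 1) ^ (m - n) = (\<Prod>i\<in>{Suc n..m}. n + 1)"
    by simp
  also have "\<dots> \<le> \<Prod>{Suc n..m}"
    by (intro prod_mono) auto
  finally have "(n + 1) ^ (m - n) * fact n \<le> (fact m :: nat)"
    using fact_eq_fact_times[OF assms] by (simp add: mult.commute)
  then have "real ((n + 1) ^ (m - n) * fact n) \<le> real (fact m)"
    by (simp only: of_nat_le_iff)
  then show ?thesis
    by (simp add: add.commute)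
qed

definition deviation :: "nat \<Rightarrow> real \<Rightarrow> real" where
  "deviation k L = (sqrt (L / real k) + L / real k) / 10"

lemma deviation_nonneg: "0 \<le> L \<Longrightarrow> 0 \<le> deviation k L"
  by (simp add: deviation_def)

lemma sqrt_mult_deviation_le:
  assumes "0 < k" "0 \<le> L"
  shows "sqrt (real k) * deviation k L \<le> (1 + 2 * L) / 10"
proof -
  have k: "1 \<le> sqrt (real k)"
    using assms(1) by simp
  have "sqrt (real k) * deviation k L = (sqrt L + L / sqrt (real k)) / 10"
    using k by (simp add: deviation_def real_sqrt_divide field_simps)
  also have "\<dots> \<le> (1 + 2 * L) / 10"
  proof -
    have "sqrt L \<le> 1 + L"
    proof (cases "L \<le> 1")
      case True
      then show ?thesis
        using assms(2) by (simp add: add_increasing2)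
    next
      case False
      then show ?thesis
        using real_sqrt_le_self[of L] by simp
    qed
    moreover have "L / sqrt (real k) \<le> L"
      using mult_left_mono[OF k assms(2)] k by (simp add: divide_le_eq)
    ultimately have "sqrt L + L / sqrt (real k) \<le> 1 + 2 * L"
      by linarith
    then show ?thesis
      by (rule divide_right_mono) simp
  qed
  finally show ?thesis .
qed

lemma mult_deviation_sq_le:
  assumes "0 < k" "0 \<le> L"
  shows "real k * ((deviation k L)\<^sup>2 / (2 + deviation k L)) \<le> L / 5"
proof -
  define a where "a = deviation k L"
  define s where "s = sqrt (L / real k)"
  have "real k * s\<^sup>2 = L"
    using assms by (simp add: s_def)
  have a: "a = (s + s\<^sup>2) / 10"
    using assms(2) by (simp add: a_def deviation_def s_def)
  have "100 * (5 * a\<^sup>2) = s\<^sup>2 * (5 * (1 + s)\<^sup>2)"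
    by (simp add: a power2_eq_square algebra_simps)
  also have "\<dots> \<le> s\<^sup>2 * (200 + 10 * s + 10 * s\<^sup>2)"
    by (intro mult_left_mono) (auto simp: power2_eq_square algebra_simps)
  also have "\<dots> = 100 * (s\<^sup>2 * (2 + a))"
    by (simp add: a power2_eq_square algebra_simps)
  finally have "5 * a\<^sup>2 \<le> s\<^sup>2 * (2 + a)"
    by linarith
  then have "real k * (5 * a\<^sup>2) \<le> real k * (s\<^sup>2 * (2 + a))"
    by (rule mult_left_mono) simp
  also have "\<dots> = L * (2 + a)"
    using \<open>real k * s\<^sup>2 = L\<close> by (simp add: algebra_simps)
  finally have "real k * (5 * a\<^sup>2) \<le> L * (2 + a)" .
  moreover have "0 \<le> a"
    using assms(2) by (simp add: a_def deviation_nonneg)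
  ultimately show ?thesis
    unfolding a_def[symmetric] by (simp add: field_simps)
qed

lemma exp_neg_mult_one_plus_power_ge:
  fixes k r :: nat and L :: real
  assumes "0 < k" "0 \<le> L" "r \<le> k" "real r \<le> 3/2 * sqrt (real k)"
  shows "exp (-1 - L) \<le> exp (- real k * deviation k L) * (1 + deviation k L) ^ (k - r)"
proof -
  define a where "a = deviation k L"
  have "0 \<le> a"
    using assms(2) by (simp add: a_def deviation_nonneg)
  have "real r * a \<le> 3/2 * (sqrt (real k) * a)"
    using mult_right_mono[OF assms(4) \<open>0 \<le> a\<close>] by simp
  also have "\<dots> \<le> 3/20 * (1 + 2 * L)"
    using sqrt_mult_deviation_le[OF assms(1,2)] by (simp add: a_def)
  finally have lin: "real r * a \<le> 3/20 * (1 + 2 * L)" .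
  have "2 * a / (2 + a) = a - a\<^sup>2 / (2 + a)"
    using \<open>0 \<le> a\<close> by (simp add: field_simps power2_eq_square)
  then have "real (k - r) * ln (1 + a) \<ge> real k * (a - a\<^sup>2 / (2 + a)) - real r * a"
    using ln_one_plus_ge[OF \<open>0 \<le> a\<close>] ln_add_one_self_le_self[OF \<open>0 \<le> a\<close>] assms(3)
    by (simp add: left_diff_distrib) (intro diff_mono mult_left_mono; simp)
  then have "exp (-1 - L) \<le> exp (- real k * a + real (k - r) * ln (1 + a))"
    using mult_deviation_sq_le[OF assms(1,2)] lin assms(2) by (simp add: a_def algebra_simps)
  also have "\<dots> = exp (- real k * a) * exp (ln (1 + a)) ^ (k - r)"
    by (simp only: exp_add exp_of_nat_mult)
  also have "\<dots> = exp (- real k * a) * (1 + a) ^ (k - r)"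
    using \<open>0 \<le> a\<close> by simp
  finally show ?thesis
    by (simp add: a_def)
qed

definition poisson_cdf :: "real \<Rightarrow> nat \<Rightarrow> real" where
  "poisson_cdf \<mu> m = (\<Sum>n\<le>m. \<mu> ^ n * exp (- \<mu>) / fact n)"

lemma power_div_fact_shift_le:
  fixes \<mu> c :: real and n k r :: nat
  assumes "n \<le> k" "k - n \<le> r" "0 < c" "c \<le> real n + 1" "c \<le> \<mu>"
  shows "\<mu> ^ k / fact k * (c / \<mu>) ^ r \<le> \<mu> ^ n / fact n"
proof -
  have "0 < \<mu>"
    using assms by simp
  have "(c / \<mu>) ^ r \<le> (c / \<mu>) ^ (k - n)"
    using assms \<open>0 < \<mu>\<close> by (intro power_decreasing) auto
  then have "\<mu> ^ k / fact k * (c / \<mu>) ^ r \<le> \<mu> ^ k / fact k * (c / \<mu>) ^ (k - n)"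
    using \<open>0 < \<mu>\<close> by (intro mult_left_mono) auto
  also have "\<dots> = \<mu> ^ n * c ^ (k - n) / fact k"
  proof -
    have "\<mu> ^ k = \<mu> ^ n * \<mu> ^ (k - n)"
      using assms(1) by (simp flip: power_add)
    then show ?thesis
      using \<open>0 < \<mu>\<close> by (simp add: power_divide)
  qed
  also have "\<dots> \<le> \<mu> ^ n * (real n + 1) ^ (k - n) / fact k"
    using assms \<open>0 < \<mu>\<close> by (intro divide_right_mono mult_left_mono power_mono) auto
  also have "\<dots> \<le> \<mu> ^ n / fact n"
    using power_mult_fact_le_fact[OF assms(1)] \<open>0 < \<mu>\<close>
    by (simp add: divide_simps mult.commute mult_left_mono)
  finally show ?thesis .
qed

lemma poisson_cdf_ge_block:
  fixes \<mu> :: real and k r :: nat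
  assumes "r \<le> k" "real k - real r + 1 \<le> \<mu>"
  shows "real r * (\<mu> ^ k * exp (- \<mu>) / fact k) * ((real k - real r + 1) / \<mu>) ^ r
    \<le> poisson_cdf \<mu> (k - 1)"
proof -
  define B where "B = \<mu> ^ k * exp (- \<mu>) / fact k * ((real k - real r + 1) / \<mu>) ^ r"
  have "B \<le> \<mu> ^ n * exp (- \<mu>) / fact n" if "n \<in> {k - r..<k}" for n
  proof -
    have "\<mu> ^ k / fact k * ((real k - real r + 1) / \<mu>) ^ r \<le> \<mu> ^ n / fact n"
      using that assms by (intro power_div_fact_shift_le) auto
    then have "\<mu> ^ k / fact k * ((real k - real r + 1) / \<mu>) ^ r * exp (- \<mu>)
        \<le> \<mu> ^ n / fact n * exp (- \<mu>)"
      by (rule mult_right_mono) simp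
    then show ?thesis
      unfolding B_def by (simp add: field_simps)
  qed
  then have "real r * B \<le> (\<Sum>n\<in>{k - r..<k}. \<mu> ^ n * exp (- \<mu>) / fact n)"
    using sum_bounded_below[of "{k - r..<k}" B] assms(1) by simp
  also have "\<dots> \<le> poisson_cdf \<mu> (k - 1)"
    unfolding poisson_cdf_def using assms by (intro sum_mono2) auto
  finally show ?thesis
    by (simp add: B_def mult.assoc)
qed

lemma quarter_le_power_shift:
  fixes k r :: nat
  assumes "1 \<le> r" "r \<le> k" "real r \<le> sqrt (real k) / 2 + 1"
  shows "1/4 \<le> ((real k - real r + 1) / real k) ^ r"
proof -
  have k: "1 \<le> real k" "sqrt (real k) \<le> real k"
    using assms by (auto intro: real_sqrt_le_self)
  have "real r * (real r - 1) \<le> (sqrt (real k) / 2 + 1) * (sqrt (real k) / 2)"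
    using assms by (intro mult_mono) auto
  also have "\<dots> = real k / 4 + sqrt (real k) / 2"
    using k by (simp add: algebra_simps)
  finally have bound: "real r * ((real r - 1) / real k) \<le> 3/4"
    using k by (simp add: divide_simps)
  have "(real k - real r + 1) / real k = 1 + (- ((real r - 1) / real k))"
    using k by (simp add: field_simps)
  moreover have "-1 \<le> - ((real r - 1) / real k)"
    using assms k by (simp add: divide_simps)
  ultimately have "1 + real r * (- ((real r - 1) / real k)) \<le> ((real k - real r + 1) / real k) ^ r"
    using Bernoulli_inequality[of "- ((real r - 1) / real k)" r] by simp
  then show ?thesis
    using bound by simp
qed

lemma power_exp_div_fact_ge:
  assumes "0 < k"
  shows "1 / (exp 1 * sqrt (real k)) \<le> real k ^ k * exp (- real k) / fact k"
  using fact_Stirling_upper[of k] assms by (simp add: divide_simps exp_minus mult_ac)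

lemma power_exp_rescale:
  fixes k r :: nat and a c :: real
  assumes "r \<le> k" "0 < k" "0 \<le> a"
  defines "\<mu> \<equiv> real k * (1 + a)"
  shows "\<mu> ^ k * exp (- \<mu>) * (c / \<mu>) ^ r
    = real k ^ k * exp (- real k) * (exp (- real k * a) * (1 + a) ^ (k - r)) * (c / real k) ^ r"
proof -
  have split: "x ^ k = x ^ (k - r) * x ^ r" for x :: real
    using assms(1) by (simp flip: power_add)
  have "0 < \<mu>"
    using assms(2,3) by (simp add: \<mu>_def)
  then have "\<mu> ^ k * (c / \<mu>) ^ r = \<mu> ^ (k - r) * c ^ r"
    by (simp add: split[of \<mu>] power_divide)
  also have "\<dots> = real k ^ k * (1 + a) ^ (k - r) * (c / real k) ^ r"
    using assms(2) by (simp add: split[of "real k"] \<mu>_def power_mult_distrib power_divide)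
  finally have "\<mu> ^ k * (c / \<mu>) ^ r = real k ^ k * (1 + a) ^ (k - r) * (c / real k) ^ r" .
  moreover have "exp (- \<mu>) = exp (- real k) * exp (- real k * a)"
    unfolding \<mu>_def by (simp add: algebra_simps flip: exp_add)
  ultimately show ?thesis
    by (simp add: ac_simps)
qed

lemma exists_nat_near_half_sqrt:
  assumes "0 < k"
  obtains r :: nat where "1 \<le> r" "r \<le> k" "sqrt (real k) / 2 \<le> real r" "real r \<le> sqrt (real k) / 2 + 1"
proof
  define r where "r = nat \<lceil>sqrt (real k) / 2\<rceil>"
  have k: "1 \<le> sqrt (real k)" "sqrt (real k) \<le> real k"
    using assms by (auto intro: real_sqrt_le_self)
  have "real r = of_int \<lceil>sqrt (real k) / 2\<rceil>"
    using k unfolding r_def by simp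
  then show r: "sqrt (real k) / 2 \<le> real r" "real r \<le> sqrt (real k) / 2 + 1"
    by (simp_all add: le_of_int_ceiling of_int_ceiling_le_add_one)
  have "0 < real r"
    using r(1) k(1) by linarith
  then show "1 \<le> r"
    by simp
  show "r \<le> k"
    using k unfolding r_def by (simp add: ceiling_le_iff nat_le_iff)
qed

lemma poisson_cdf_lower_bound:
  fixes k :: nat and L :: real
  assumes "0 < k" "0 \<le> L"
  shows "exp (- L) / 100 \<le> poisson_cdf (real k * (1 + deviation k L)) (k - 1)"
proof -
  define a where "a = deviation k L"
  define \<mu> where "\<mu> = real k * (1 + a)"
  obtain r where r: "1 \<le> r" "r \<le> k" "sqrt (real k) / 2 \<le> real r" "real r \<le> sqrt (real k) / 2 + 1"
    using exists_nat_near_half_sqrt[OF assms(1)] .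
  define c where "c = real k - real r + 1"
  have k: "1 \<le> sqrt (real k)"
    using assms(1) by simp
  have "0 \<le> a"
    using assms(2) by (simp add: a_def deviation_nonneg)
  have "c \<le> real k"
    using r(1) unfolding c_def by simp
  also have "\<dots> \<le> \<mu>"
    unfolding \<mu>_def using \<open>0 \<le> a\<close> by (simp add: algebra_simps)
  finally have "c \<le> \<mu>" .
  have "1 / (2 * exp 1) \<le> real r * (1 / (exp 1 * sqrt (real k)))"
    using r(3) k by (simp add: divide_simps)
  also have "\<dots> \<le> real r * (real k ^ k * exp (- real k) / fact k)"
    using power_exp_div_fact_ge[OF assms(1)] by (intro mult_left_mono) auto
  finally have mode: "1 / (2 * exp 1) \<le> real r * (real k ^ k * exp (- real k) / fact k)" .
  have "real r \<le> 3/2 * sqrt (real k)"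
    using r(4) k by linarith
  then have tilt: "exp (-1 - L) \<le> exp (- real k * a) * (1 + a) ^ (k - r)"
    unfolding a_def using assms r(2) by (intro exp_neg_mult_one_plus_power_ge)
  have shift: "1/4 \<le> (c / real k) ^ r"
    unfolding c_def using r(1,2,4) by (rule quarter_le_power_shift)
  have "exp (- L) / 100 \<le> 1 / (2 * exp 1) * exp (-1 - L) * (1/4)"
  proof -
    have "exp 1 * exp 1 \<le> (3 * 3 :: real)"
      by (intro mult_mono exp_le) auto
    then show ?thesis
      by (simp add: exp_diff exp_minus field_simps)
  qed
  also have "\<dots> \<le> real r * (real k ^ k * exp (- real k) / fact k)
      * (exp (- real k * a) * (1 + a) ^ (k - r)) * (c / real k) ^ r"
    using mode tilt shift \<open>0 \<le> a\<close> by (intro mult_mono) auto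
  also have "\<dots> = real r * (\<mu> ^ k * exp (- \<mu>) / fact k) * (c / \<mu>) ^ r"
    using power_exp_rescale[OF r(2) assms(1) \<open>0 \<le> a\<close>, of c]
    by (simp add: \<mu>_def field_simps)
  also have "\<dots> \<le> poisson_cdf \<mu> (k - 1)"
    unfolding c_def using r(2) \<open>c \<le> \<mu>\<close> c_def by (intro poisson_cdf_ge_block) auto
  finally show ?thesis
    unfolding \<mu>_def a_def .
qed

lemma prob_space_gamma_kk: "0 < k \<Longrightarrow> prob_space (gamma_kk k)"
  unfolding gamma_kk_def using prob_space_erlang_density[of "real k" "k - 1"] by simp

lemma sets_gamma_kk: "sets (gamma_kk k) = sets borel"
  by (simp add: gamma_kk_def)

lemma measure_gamma_kk_atMost:
  assumes "0 < k" "0 \<le> t"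
  shows "measure (gamma_kk k) {..t} = 1 - poisson_cdf (real k * t) (k - 1)"
proof -
  interpret prob_space "gamma_kk k"
    using assms(1) by (rule prob_space_gamma_kk)
  have "emeasure (gamma_kk k) {..t} = erlang_CDF (k - 1) (real k) t"
    unfolding gamma_kk_def using assms(1) by (simp add: emeasure_erlang_density)
  then have "measure (gamma_kk k) {..t} = erlang_CDF (k - 1) (real k) t"
    using erlang_CDF_nonneg[of "real k"] assms(1) by (simp add: emeasure_eq_measure)
  then show ?thesis
    using assms(2) by (simp add: erlang_CDF_def poisson_cdf_def)
qed

lemma exists_measure_abs_le_gt:
  fixes M :: "real measure" and c :: real
  assumes "prob_space M" "sets M = sets borel" "p < 1"
  shows "\<exists>y. p < measure M {x. \<bar>x - c\<bar> \<le> y}"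
proof -
  interpret prob_space M
    by (rule assms(1))
  define A where "A n = {x. \<bar>x - c\<bar> \<le> real n}" for n
  have "A n = {c - real n..c + real n}" for n
    by (auto simp: A_def)
  then have "range A \<subseteq> sets M"
    using assms(2) by auto
  moreover have "incseq A"
    by (auto simp: A_def incseq_def)
  ultimately have "(\<lambda>n. measure M (A n)) \<longlonglongrightarrow> measure M (\<Union>n. A n)"
    by (rule finite_Lim_measure_incseq)
  moreover have "(\<Union>n. A n) = space M"
    using sets_eq_imp_space_eq[OF assms(2)] real_arch_simple by (auto simp: A_def)
  ultimately have "eventually (\<lambda>n. p < measure M (A n)) sequentially"
    using assms(3) by (intro order_tendstoD(1)) (simp_all add: prob_space)
  then obtain n where "p < measure M (A n)"
    by (auto simp: eventually_sequentially)
  then show ?thesis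
    unfolding A_def by blast
qed

lemma le_V:
  assumes "0 < k" "0 < \<delta>"
    and "\<And>y. y < a \<Longrightarrow> measure (gamma_kk k) {x. \<bar>x - 1\<bar> \<le> y} < 1 - \<delta> / 2"
  shows "a \<le> V k \<delta>"
proof -
  obtain y0 where "1 - \<delta> / 2 < measure (gamma_kk k) {x. \<bar>x - 1\<bar> \<le> y0}"
    using exists_measure_abs_le_gt[OF prob_space_gamma_kk sets_gamma_kk, of k "1 - \<delta> / 2"] assms(1,2)
    by auto
  then have "{y. 1 - \<delta> / 2 \<le> measure (gamma_kk k) {x. \<bar>x - 1\<bar> \<le> y}} \<noteq> {}"
    by (metis (mono_tags) empty_iff less_le mem_Collect_eq)
  then show ?thesis
    unfolding V_def
  proof (rule cInf_greatest)
    fix y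
    assume "y \<in> {y. 1 - \<delta> / 2 \<le> measure (gamma_kk k) {x. \<bar>x - 1\<bar> \<le> y}}"
    then show "a \<le> y"
      using assms(3)[of y] by (meson mem_Collect_eq not_le)
  qed
qed

lemma V_nonneg:
  assumes "0 < k" "0 < \<delta>" "\<delta> < 2"
  shows "0 \<le> V k \<delta>"
proof (rule le_V)
  fix y :: real
  assume "y < 0"
  then have "{x. \<bar>x - 1\<bar> \<le> y} = {}"
    by auto
  then show "measure (gamma_kk k) {x. \<bar>x - 1\<bar> \<le> y} < 1 - \<delta> / 2"
    using assms(3) by simp
qed (use assms in auto)

lemma deviation_le_V:
  assumes "0 < k" "0 \<le> L" "0 < \<delta>" "\<delta> \<le> exp (- L) / 100"
  shows "deviation k L \<le> V k \<delta>"
proof (rule le_V)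
  interpret prob_space "gamma_kk k"
    using assms(1) by (rule prob_space_gamma_kk)
  define a where "a = deviation k L"
  fix y
  assume "y < deviation k L"
  then have "{x. \<bar>x - 1\<bar> \<le> y} \<subseteq> {..1 + a}"
    by (auto simp: a_def abs_le_iff)
  moreover have "{..1 + a} \<in> sets (gamma_kk k)"
    by (simp add: sets_gamma_kk)
  ultimately have "measure (gamma_kk k) {x. \<bar>x - 1\<bar> \<le> y} \<le> measure (gamma_kk k) {..1 + a}"
    by (rule finite_measure_mono)
  also have "\<dots> = 1 - poisson_cdf (real k * (1 + a)) (k - 1)"
    using assms(1,2) by (intro measure_gamma_kk_atMost) (auto simp: a_def deviation_nonneg)
  also have "\<dots> \<le> 1 - \<delta>"
    using poisson_cdf_lower_bound[OF assms(1,2)] assms(4) by (simp add: a_def)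
  finally show "measure (gamma_kk k) {x. \<bar>x - 1\<bar> \<le> y} < 1 - \<delta> / 2"
    using assms(3) by simp
qed (use assms in auto)

lemma V_ge_log_bound:
  assumes "0 < k" "0 < \<delta>" "\<delta> < 1"
  shows "1/10 * (sqrt (max 0 (ln ((1/100) / \<delta>)) / real k) + ln ((1/100) / \<delta>) / real k) \<le> V k \<delta>"
proof -
  define L where "L = ln ((1/100) / \<delta>)"
  have "1/10 * (sqrt (max 0 L / real k) + L / real k) \<le> V k \<delta>"
  proof (cases "L \<le> 0")
    case True
    then have "1/10 * (sqrt (max 0 L / real k) + L / real k) \<le> 0"
      using assms(1) by (simp add: divide_nonpos_pos)
    also have "0 \<le> V k \<delta>"
      using assms by (intro V_nonneg) auto
    finally show ?thesis .
  next
    case False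
    have "\<delta> = exp (- L) / 100"
      using assms(2) by (simp add: L_def exp_minus)
    then show ?thesis
      using deviation_le_V[of k L \<delta>] assms False by (simp add: deviation_def)
  qed
  then show ?thesis
    by (simp add: L_def)
qed

theorem lemma5:
  shows "\<exists>c1 c2::real. 0 < c1 \<and> c1 \<le> 1 \<and> 0 < c2 \<and> c2 \<le> 2 \<and>
    (\<forall>k::nat. k \<ge> 1 \<longrightarrow> (\<forall>\<delta>::real. 0 < \<delta> \<and> \<delta> < 1 \<longrightarrow>
       V k \<delta> \<ge> c1 * (sqrt (max 0 (ln (c2 / \<delta>)) / real k) + ln (c2 / \<delta>) / real k)))"
  by (intro exI[of _ "1/10"] exI[of _ "1/100"] conjI allI impI V_ge_log_bound) auto

end
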